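(* Let $l\ge 2$ be an integer and $a\in\{1,\dots,l-1\}$, and let $X=X(\mathbb{Z}_{2l},\{\pm a,l\})$ be a connected $3$-regular circulant graph. Then perfect state transfer does not occur on $X$ between (distinct) vertex type states, i.e. there are no distinct vertices $x,y$ of $X$, no integer $\tau\ge 1$ and no $\gamma\in\mathbb{C}$ with $|\gamma|=1$ such that $U^{\tau}d^*e_x=\gamma\, d^*e_y$.
   Context: All graphs are finite and simple. For a graph $\Gamma=(V,E)$, the set of symmetric arcs is $\mathcal{A}=\{(x,y),(y,x)\mid \{x,y\}\in E\}$; for an arc $a=(x,y)$ write $o(a)=x$, $t(a)=y$, $a^{-1}=(y,x)$. The boundary matrix $d\in\mathbb{C}^{V\times\mathcal{A}}$ is $d_{x,a}=\frac{1}{\sqrt{\deg x}}\delta_{x,t(a)}$; the shift matrix $R\in\mathbb{C}^{\mathcal{A}\times\mathcal{A}}$ is $R_{a,b}=\delta_{a,b^{-1}}$; the time evolution matrix (Grover walk) is $U=R(2d^*d-I_{\mathcal{A}})$. For $x\in V$, $e_x\in\mathbb{C}^V$ is the standard unit vector, and $d^*e_x$ is called a vertex type state. Perfect state transfer from a state $\Phi$ to a state $\Psi$ (unit vectors in $\mathbb{C}^{\mathcal{A}}$, $\Phi\ne\Psi$) at time $\tau\in\mathbb{Z}_{\ge1}$ means $U^\tau\Phi=\gamma\Psi$ for some $\gamma\in\mathbb{C}$ with $|\gamma|=1$. For $S\subseteq\mathbb{Z}_n\setminus\{0\}$ with $S=-S$, the circulant graph $X(\mathbb{Z}_n,S)$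 has vertex set $\mathbb{Z}_n$ and edge set $\{\{x,y\}\mid y-x\in S\}$. *)

theory Defs
  imports Complex_Main
begin

text \<open>A finite simple graph is given by a vertex set V and an adjacency relation E
(assumed symmetric and irreflexive on V). Vectors in C^A are functions on pairs,
only their values on the arc set A matter.\<close>

definition arcs :: "'a set \<Rightarrow> ('a \<Rightarrow> 'a \<Rightarrow> bool) \<Rightarrow> ('a \<times> 'a) set" where
  "arcs V E = {(x, y). x \<in> V \<and> y \<in> V \<and> E x y}"

definition deg :: "'a set \<Rightarrow> ('a \<Rightarrow> 'a \<Rightarrow> bool) \<Rightarrow> 'a \<Rightarrow> nat" where
  "deg V E x = card {y \<in> V. E x y}"

definition bdry :: "'a set \<Rightarrow> ('a \<Rightarrow> 'a \<Rightarrow> bool) \<Rightarrow> 'a \<Rightarrow> 'a \<times> 'a \<Rightarrow> complex" where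
  "bdry V E x a = (if x = snd a then complex_of_real (1 / sqrt (real (deg V E x))) else 0)"

definition bdry_adj :: "'a set \<Rightarrow> ('a \<Rightarrow> 'a \<Rightarrow> bool) \<Rightarrow> 'a \<times> 'a \<Rightarrow> 'a \<Rightarrow> complex" where
  "bdry_adj V E a x = cnj (bdry V E x a)"

definition shift :: "'a \<times> 'a \<Rightarrow> 'a \<times> 'a \<Rightarrow> complex" where
  "shift a b = (if a = prod.swap b then 1 else 0)"

definition coin :: "'a set \<Rightarrow> ('a \<Rightarrow> 'a \<Rightarrow> bool) \<Rightarrow> 'a \<times> 'a \<Rightarrow> 'a \<times> 'a \<Rightarrow> complex" where
  "coin V E a b = 2 * (\<Sum>x\<in>V. bdry_adj V E a x * bdry V E x b) - (if a = b then 1 else 0)"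

definition grover :: "'a set \<Rightarrow> ('a \<Rightarrow> 'a \<Rightarrow> bool) \<Rightarrow> 'a \<times> 'a \<Rightarrow> 'a \<times> 'a \<Rightarrow> complex" where
  "grover V E a b = (\<Sum>c\<in>arcs V E. shift a c * coin V E c b)"

definition grover_apply :: "'a set \<Rightarrow> ('a \<Rightarrow> 'a \<Rightarrow> bool) \<Rightarrow> ('a \<times> 'a \<Rightarrow> complex) \<Rightarrow> ('a \<times> 'a \<Rightarrow> complex)" where
  "grover_apply V E v = (\<lambda>a. if a \<in> arcs V E then (\<Sum>b\<in>arcs V E. grover V E a b * v b) else 0)"

definition vertex_state :: "'a set \<Rightarrow> ('a \<Rightarrow> 'a \<Rightarrow> bool) \<Rightarrow> 'a \<Rightarrow> ('a \<times> 'a \<Rightarrow> complex)" where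
  "vertex_state V E x = (\<lambda>a. if a \<in> arcs V E then bdry_adj V E a x else 0)"

definition connected_graph :: "'a set \<Rightarrow> ('a \<Rightarrow> 'a \<Rightarrow> bool) \<Rightarrow> bool" where
  "connected_graph V E \<longleftrightarrow>
     (\<forall>x\<in>V. \<forall>y\<in>V. (\<lambda>u v. u \<in> V \<and> v \<in> V \<and> E u v)\<^sup>*\<^sup>* x y)"

definition regular_graph :: "'a set \<Rightarrow> ('a \<Rightarrow> 'a \<Rightarrow> bool) \<Rightarrow> nat \<Rightarrow> bool" where
  "regular_graph V E k \<longleftrightarrow> (\<forall>x\<in>V. deg V E x = k)"

text \<open>Circulant graph X(Z_n, S): vertices 0..n-1 (representatives of Z_n),
  x ~ y iff (y - x) mod n \<in> S mod n.\<close>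
definition circ_vertices :: "int \<Rightarrow> int set" where
  "circ_vertices n = {0..<n}"

definition circ_adj :: "int \<Rightarrow> int set \<Rightarrow> int \<Rightarrow> int \<Rightarrow> bool" where
  "circ_adj n S x y \<longleftrightarrow> (y - x) mod n \<in> (\<lambda>s. s mod n) ` S"

end

(*
  On a k-regular graph the Grover walk started in d^* e_x takes, after t + 1 steps, the value
  (F_{t+1}(u) - F_t(w)) / sqrt k on the arc (u, w), where F_0 = 0, F_1 = delta_x and
  F_{t+2} = (2/k) A F_{t+1} - F_t for the adjacency operator A.  Perfect state transfer to y
  thus becomes the system F_tau(u) - F_{tau-1}(w) = gamma [w = y] over all arcs.

  On X(Z_{2l}, {a, -a, l}) the characters v |-> omega^v with omega^{2l} = 1 diagonalise A, so
  each Fourier coefficient of F_t satisfies a scalar Chebyshev recursion, and summing the system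
  against a character gives linear relations between consecutive coefficients.
  If 3 does not divide l, the numbers 3^t F_{t+1} are integers congruent to 2^t A^t delta_x
  modulo 3; the system forces them to vanish mod 3, against A^(3^j) = A mod 3 (Frobenius) for
  3^j = 1 mod 2l.  If a and l have different parity, omega = -1 gives the coefficient +-2/3,
  whose Chebyshev sequence never vanishes.  Otherwise connectivity forces a, l odd and 3 not
  dividing a, and the characters 1, -1, a primitive cube root and a primitive 2l-th root of
  unity give gamma = 1, tau even with x = y mod 2, and y - x = +-l, which is odd.
*)

theory Submission
  imports Defs "HOL-Library.Real_Mod" "HOL-Number_Theory.Residues"
begin

section \<open>Chebyshev-type recurrences\<close>

fun chebyshev_seq :: "('a \<Rightarrow> 'a) \<Rightarrow> 'a \<Rightarrow> 'a \<Rightarrow> nat \<Rightarrow> 'a::minus" where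
  "chebyshev_seq L p q 0 = p"
| "chebyshev_seq L p q (Suc 0) = q"
| "chebyshev_seq L p q (Suc (Suc t)) = L (chebyshev_seq L p q (Suc t)) - chebyshev_seq L p q t"

lemma chebyshev_seq_map:
  assumes "\<And>u v. h (u - v) = h u - h v" and "\<And>u. h (L u) = M (h u)"
  shows "h (chebyshev_seq L p q t) = chebyshev_seq M (h p) (h q) t"
  by (induction t rule: induct_nat_012) (simp_all add: assms)

lemma chebyshev_seq_scale:
  "chebyshev_seq ((*) c) 0 z t = z * chebyshev_seq ((*) c) 0 1 t" for c z :: "'a::comm_ring_1"
  using chebyshev_seq_map[of "(*) z" "(*) c" "(*) c" 0 1 t] by (simp add: algebra_simps)

lemma chebyshev_seq_two: "chebyshev_seq ((*) 2) 0 z t = of_nat t * z" for z :: "'a::comm_ring_1"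
  by (induction t rule: induct_nat_012) (simp_all add: algebra_simps)

lemma chebyshev_seq_minus_two:
  "chebyshev_seq ((*) (- 2)) 0 z t = (- 1) ^ Suc t * of_nat t * z" for z :: "'a::comm_ring_1"
  by (induction t rule: induct_nat_012) (simp_all add: algebra_simps)

lemma chebyshev_seq_zero:
  "chebyshev_seq ((*) 0) 0 z (2 * j) = 0 \<and> chebyshev_seq ((*) 0) 0 z (Suc (2 * j)) = (- 1) ^ j * z"
  for z :: "'a::comm_ring_1"
  by (induction j) simp_all

lemma chebyshev_seq_zero_eq_0_imp_even:
  fixes z :: "'a::idom"
  assumes "chebyshev_seq ((*) 0) 0 z t = 0" and "z \<noteq> 0"
  shows "even t"
proof (rule ccontr)
  assume "odd t"
  then obtain j where "t = Suc (2 * j)" by (metis oddE Suc_eq_plus1)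
  then show False using assms chebyshev_seq_zero[of z j] by simp
qed

lemma chebyshev_seq_invariant:
  "chebyshev_seq ((*) c) 0 z (Suc t) ^ 2 - c * chebyshev_seq ((*) c) 0 z (Suc t) * chebyshev_seq ((*) c) 0 z t
     + chebyshev_seq ((*) c) 0 z t ^ 2 = z ^ 2" for c z :: "'a::comm_ring_1"
  by (induction t) (simp_all add: algebra_simps power2_eq_square)

lemma chebyshev_seq_third_nonzero:
  fixes m :: int and z :: "'a::field_char_0"
  assumes "\<not> 3 dvd m" and "z \<noteq> 0"
  shows "chebyshev_seq ((*) (of_int m / 3)) 0 z (Suc t) \<noteq> 0"
proof -
  let ?s = "chebyshev_seq ((*) (of_int m / 3 :: 'a)) 0 1"
  have "\<exists>K1 K2. 3 ^ t * ?s (Suc t) = of_int K1 \<and> 3 ^ Suc t * ?s (Suc (Suc t)) = of_int K2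
      \<and> \<not> 3 dvd K1 \<and> [K2 = m * K1] (mod 3)"
  proof (induction t)
    case 0
    show ?case by (rule exI[of _ 1], rule exI[of _ m]) simp
  next
    case (Suc t)
    then obtain K1 K2 where K1: "3 ^ t * ?s (Suc t) = of_int K1" and K2: "3 ^ Suc t * ?s (Suc (Suc t)) = of_int K2"
      and "\<not> 3 dvd K1" and "[K2 = m * K1] (mod 3)" by blast
    then have "\<not> 3 dvd K2"
      using assms(1) prime_dvd_mult_iff[of "3::int" m K1]
      by (simp add: prime_int_numeral_eq cong_dvd_iff)
    moreover have "3 ^ Suc (Suc t) * ?s (Suc (Suc (Suc t))) = of_int (m * K2 - 9 * K1)"
    proof -
      have "?s (Suc (Suc (Suc t))) = of_int m / 3 * ?s (Suc (Suc t)) - ?s (Suc t)"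
        by (simp only: chebyshev_seq.simps)
      moreover have "3 ^ Suc (Suc t) * (of_int m / 3 * B - A) = of_int m * (3 ^ Suc t * B) - 9 * (3 ^ t * A)"
        for A B :: 'a
        by (simp add: field_simps)
      ultimately show ?thesis
        using K1 K2 by (simp del: chebyshev_seq.simps)
    qed
    moreover have "[m * K2 - 9 * K1 = m * K2] (mod 3)"
      by (simp add: cong_iff_dvd_diff)
    ultimately show ?case using K2 by blast
  qed
  then have "?s (Suc t) \<noteq> 0" by fastforce
  then show ?thesis using assms(2) by (subst chebyshev_seq_scale) simp
qed

section \<open>The Grover walk on a regular graph\<close>

locale regular_sym_graph =
  fixes V :: "'a set" and E :: "'a \<Rightarrow> 'a \<Rightarrow> bool" and k :: nat
  assumes finite_V: "finite V"
    and adj_sym: "u \<in> V \<Longrightarrow> v \<in> V \<Longrightarrow> E u v \<Longrightarrow> E v u"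
    and regular: "regular_graph V E k"
begin

definition nbrs :: "'a \<Rightarrow> 'a set" where
  "nbrs u = {p \<in> V. E u p}"

definition adj_sum :: "('a \<Rightarrow> complex) \<Rightarrow> 'a \<Rightarrow> complex" where
  "adj_sum f u = (\<Sum>p\<in>nbrs u. f p)"

definition arc_diff :: "('a \<Rightarrow> complex) \<Rightarrow> ('a \<Rightarrow> complex) \<Rightarrow> 'a \<times> 'a \<Rightarrow> complex" where
  "arc_diff f g e = (if e \<in> arcs V E then f (fst e) - g (snd e) else 0)"

lemma finite_arcs: "finite (arcs V E)"
  by (rule finite_subset[of _ "V \<times> V"]) (auto simp: arcs_def finite_V)

lemma arc_swap: "(u, w) \<in> arcs V E \<Longrightarrow> (w, u) \<in> arcs V E"
  by (auto simp: arcs_def intro: adj_sym)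

lemma card_nbrs: "u \<in> V \<Longrightarrow> card (nbrs u) = k"
  using regular by (simp add: regular_graph_def Defs.deg_def nbrs_def)

lemma degree_pos: "(u, w) \<in> arcs V E \<Longrightarrow> k > 0"
  using card_nbrs[of u] finite_V by (auto simp: arcs_def nbrs_def card_gt_0_iff)

lemma arcs_into: "u \<in> V \<Longrightarrow> {b \<in> arcs V E. snd b = u} = (\<lambda>p. (p, u)) ` nbrs u"
  by (auto simp: arcs_def nbrs_def image_iff intro: adj_sym)

lemma grover_arc:
  assumes "(u, w) \<in> arcs V E"
  shows "grover V E (u, w) b = 2 / of_nat k * of_bool (snd b = u) - of_bool (b = (w, u))"
proof -
  have "u \<in> V" using assms by (simp add: arcs_def)
  have deg_u: "Defs.deg V E u = k"
    using card_nbrs[OF \<open>u \<in> V\<close>] by (simp add: Defs.deg_def nbrs_def)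
  have "bdry_adj V E (w, u) v * bdry V E v b = (if v = u then of_bool (snd b = u) / of_nat k else 0)" for v
  proof (cases "v = u")
    case True
    have "complex_of_real (1 / sqrt k) * complex_of_real (1 / sqrt k) = 1 / of_nat k"
      by (simp flip: of_real_mult)
    then show ?thesis
      using True by (cases "snd b = u") (simp_all add: bdry_adj_def bdry_def deg_u)
  qed (simp add: bdry_adj_def bdry_def)
  then have "coin V E (w, u) b = 2 / of_nat k * of_bool (snd b = u) - of_bool (b = (w, u))"
    using \<open>u \<in> V\<close> finite_V by (simp add: coin_def eq_commute[of "(w, u)"])
  moreover have "shift (u, w) c * coin V E c b = (if c = (w, u) then coin V E c b else 0)" for c
    by (cases c) (auto simp: shift_def)
  ultimately show ?thesis
    using arc_swap[OF assms] finite_arcs by (simp add: grover_def)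
qed

lemma grover_apply_divide: "grover_apply V E (\<lambda>e. \<psi> e / r) = (\<lambda>e. grover_apply V E \<psi> e / r)"
  by (rule ext) (simp add: grover_apply_def sum_divide_distrib)

lemma grover_apply_arc:
  assumes "(u, w) \<in> arcs V E"
  shows "grover_apply V E \<psi> (u, w) = 2 / of_nat k * (\<Sum>p\<in>nbrs u. \<psi> (p, u)) - \<psi> (w, u)"
proof -
  have "u \<in> V" using assms by (simp add: arcs_def)
  have "grover_apply V E \<psi> (u, w) =
      (\<Sum>b\<in>arcs V E. 2 / of_nat k * (of_bool (snd b = u) * \<psi> b) - of_bool (b = (w, u)) * \<psi> b)"
    using assms by (simp add: grover_apply_def grover_arc left_diff_distrib mult.assoc del: of_bool_eq_iff)
  also have "\<dots> = (\<Sum>b\<in>arcs V E. 2 / of_nat k * (of_bool (snd b = u) * \<psi> b))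
      - (\<Sum>b\<in>arcs V E. of_bool (b = (w, u)) * \<psi> b)"
    by (rule sum_subtractf)
  also have "(\<Sum>b\<in>arcs V E. of_bool (b = (w, u)) * \<psi> b) = \<psi> (w, u)"
  proof -
    have "arcs V E \<inter> {b. b = (w, u)} = {(w, u)}" using arc_swap[OF assms] by auto
    then show ?thesis by (subst sum_of_bool_mult_eq[OF finite_arcs]) simp
  qed
  also have "(\<Sum>b\<in>arcs V E. 2 / of_nat k * (of_bool (snd b = u) * \<psi> b)) =
      2 / of_nat k * (\<Sum>b\<in>{b \<in> arcs V E. snd b = u}. \<psi> b)"
    by (subst sum_distrib_left[symmetric], subst sum_of_bool_mult_eq[OF finite_arcs]) (simp add: Int_def)
  also have "(\<Sum>b\<in>{b \<in> arcs V E. snd b = u}. \<psi> b) = (\<Sum>p\<in>nbrs u. \<psi> (p, u))"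
    by (simp add: arcs_into[OF \<open>u \<in> V\<close>] sum.reindex inj_on_def)
  finally show ?thesis .
qed

lemma grover_apply_arc_diff:
  "grover_apply V E (arc_diff f g) = arc_diff (\<lambda>u. 2 / of_nat k * adj_sum f u - g u) f"
proof
  fix e :: "'a \<times> 'a"
  show "grover_apply V E (arc_diff f g) e = arc_diff (\<lambda>u. 2 / of_nat k * adj_sum f u - g u) f e"
  proof (cases "e \<in> arcs V E")
    case False
    then show ?thesis by (simp add: grover_apply_def arc_diff_def)
  next
    case True
    then obtain u w where e: "e = (u, w)" and uw: "(u, w) \<in> arcs V E" by (cases e) auto
    have "u \<in> V" using uw by (simp add: arcs_def)
    have "(p, u) \<in> arcs V E" if "p \<in> nbrs u" for p
      using that \<open>u \<in> V\<close> by (auto simp: nbrs_def arcs_def intro: adj_sym)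
    then have "(\<Sum>p\<in>nbrs u. arc_diff f g (p, u)) = adj_sum f u - of_nat k * g u"
      using card_nbrs[OF \<open>u \<in> V\<close>] by (simp add: arc_diff_def adj_sum_def sum_subtractf)
    then show ?thesis
      using uw arc_swap[OF uw] degree_pos[OF uw]
      by (simp add: e grover_apply_arc) (simp add: arc_diff_def field_simps)
  qed
qed

definition walk_amp :: "'a \<Rightarrow> nat \<Rightarrow> 'a \<Rightarrow> complex" where
  "walk_amp x = chebyshev_seq (\<lambda>f u. 2 / of_nat k * adj_sum f u) (\<lambda>_. 0) (\<lambda>v. of_bool (v = x))"

lemma walk_amp_0 [simp]: "walk_amp x 0 = (\<lambda>_. 0)"
  by (simp add: walk_amp_def)

lemma walk_amp_1 [simp]: "walk_amp x (Suc 0) = (\<lambda>v. of_bool (v = x))"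
  by (simp add: walk_amp_def)

lemma vertex_state_eq: "vertex_state V E y e = of_bool (e \<in> arcs V E \<and> snd e = y) / of_real (sqrt k)"
proof -
  have "Defs.deg V E y = k" if "e \<in> arcs V E" "snd e = y"
    using that card_nbrs[of y] by (auto simp: arcs_def Defs.deg_def nbrs_def)
  then show ?thesis by (auto simp: vertex_state_def bdry_adj_def bdry_def)
qed

lemma grover_power_vertex_state:
  "(grover_apply V E ^^ Suc t) (vertex_state V E x) =
     (\<lambda>e. arc_diff (walk_amp x (Suc t)) (walk_amp x t) e / of_real (sqrt k))"
proof (induction t)
  case 0
  have "vertex_state V E x = (\<lambda>e. arc_diff (\<lambda>_. 0) (\<lambda>v. - of_bool (v = x)) e / of_real (sqrt k))"
    by (auto simp: vertex_state_eq arc_diff_def)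
  then show ?case
    by (simp add: grover_apply_divide grover_apply_arc_diff adj_sum_def walk_amp_def)
next
  case (Suc t)
  then show ?case
    by (simp add: grover_apply_divide grover_apply_arc_diff walk_amp_def fun_diff_def)
qed

definition state_transfer :: "'a \<Rightarrow> 'a \<Rightarrow> nat \<Rightarrow> complex \<Rightarrow> bool" where
  "state_transfer x y \<tau> \<gamma> \<longleftrightarrow>
     (\<forall>e\<in>arcs V E. (grover_apply V E ^^ \<tau>) (vertex_state V E x) e = \<gamma> * vertex_state V E y e)"

lemma state_transfer_walk_amp:
  assumes "state_transfer x y (Suc t) \<gamma>" and "e \<in> arcs V E"
  shows "walk_amp x (Suc t) (fst e) - walk_amp x t (snd e) = \<gamma> * of_bool (snd e = y)"
proof -
  have "k > 0" using assms(2) degree_pos by (cases e) auto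
  then show ?thesis
    using assms unfolding state_transfer_def grover_power_vertex_state
    by (simp add: vertex_state_eq arc_diff_def field_simps)
qed

end

section \<open>Circulant graphs and characters of the cyclic group\<close>

lemma mem_circ_vertices: "u \<in> circ_vertices n \<longleftrightarrow> 0 \<le> u \<and> u < n"
  by (simp add: circ_vertices_def)

lemma mod_mem_circ_vertices [simp]: "0 < n \<Longrightarrow> u mod n \<in> circ_vertices n"
  by (simp add: circ_vertices_def)

lemma circ_nbrs:
  assumes "0 < n"
  shows "{p \<in> circ_vertices n. circ_adj n S u p} = (\<lambda>s. (u + s) mod n) ` S"
proof -
  have key: "p = (u + s) mod n \<longleftrightarrow> (p - u) mod n = s mod n" if "p \<in> circ_vertices n" for p s
  proof -
    have "p = (u + s) mod n \<longleftrightarrow> p mod n = (u + s) mod n"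
      using that by (simp add: mem_circ_vertices)
    also have "\<dots> \<longleftrightarrow> (p - u) mod n = s mod n"
      by (simp add: mod_eq_dvd_iff algebra_simps)
    finally show ?thesis .
  qed
  show ?thesis
  proof (intro Set.set_eqI iffI)
    fix p assume "p \<in> {p \<in> circ_vertices n. circ_adj n S u p}"
    then obtain s where "s \<in> S" "(p - u) mod n = s mod n" "p \<in> circ_vertices n"
      by (auto simp: circ_adj_def)
    then show "p \<in> (\<lambda>s. (u + s) mod n) ` S" using key by blast
  next
    fix p assume "p \<in> (\<lambda>s. (u + s) mod n) ` S"
    then obtain s where "s \<in> S" and p: "p = (u + s) mod n" by blast
    then have "p \<in> circ_vertices n" using assms by simp
    then show "p \<in> {p \<in> circ_vertices n. circ_adj n S u p}"
      using key[of p s] p \<open>s \<in> S\<close> by (auto simp: circ_adj_def)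
  qed
qed

lemma circ_adj_sym:
  assumes "\<forall>s\<in>S. \<exists>s'\<in>S. s' mod n = (- s) mod n" and "circ_adj n S u v"
  shows "circ_adj n S v u"
proof -
  obtain s where "s \<in> S" and "(v - u) mod n = s mod n"
    using assms(2) by (auto simp: circ_adj_def)
  then have "(u - v) mod n = (- s) mod n"
    using mod_minus_cong[of "v - u" n s] by simp
  moreover obtain s' where "s' \<in> S" and "s' mod n = (- s) mod n"
    using assms(1) \<open>s \<in> S\<close> by blast
  ultimately show ?thesis
    unfolding circ_adj_def by (metis image_eqI)
qed

lemma circ_not_connected:
  assumes "2 \<le> n" and "1 < d" and "d dvd n" and "\<forall>s\<in>S. d dvd s"
  shows "\<not> connected_graph (circ_vertices n) (circ_adj n S)"
proof
  let ?R = "\<lambda>u v. u \<in> circ_vertices n \<and> v \<in> circ_vertices n \<and> circ_adj n S u v"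
  have "d dvd v - u" if "?R\<^sup>*\<^sup>* u v" for u v
    using that
  proof (induction rule: rtranclp_induct)
    case (step v w)
    then obtain s where "s \<in> S" and "(w - v) mod n = s mod n"
      by (auto simp: circ_adj_def)
    then have "d dvd (w - v) - s"
      using assms(3) by (metis mod_eq_dvd_iff dvd_trans)
    then have "d dvd w - v"
      using assms(4) \<open>s \<in> S\<close> by (metis diff_add_cancel dvd_add)
    then have "d dvd (w - v) + (v - u)" using step.IH by (rule dvd_add)
    then show ?case by simp
  qed simp
  moreover assume "connected_graph (circ_vertices n) (circ_adj n S)"
  then have "?R\<^sup>*\<^sup>* 0 1"
    using assms(1) by (simp add: connected_graph_def mem_circ_vertices)
  ultimately have "d dvd 1" by fastforce
  then show False using assms(2) by simp
qed

lemma power_int_mod: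
  fixes \<omega> :: "'a::division_ring"
  assumes "\<omega> powi n = 1"
  shows "\<omega> powi (k mod n) = \<omega> powi k"
proof (cases "\<omega> = 0")
  case True
  then show ?thesis using assms by (auto simp: power_int_0_left_if split: if_splits)
next
  case False
  have "\<omega> powi k = \<omega> powi (n * (k div n)) * \<omega> powi (k mod n)"
    using False by (simp flip: power_int_add)
  also have "\<omega> powi (n * (k div n)) = 1" by (simp add: power_int_mult assms)
  finally show ?thesis by simp
qed

lemma sum_circ_shift: "(\<Sum>v\<in>{0..<n}. g ((v + s) mod n)) = (\<Sum>v\<in>{0..<n}. g v)" for n :: int
proof (cases "0 < n")
  case True
  show ?thesis
  proof (rule sum.reindex_bij_witness[where i = "\<lambda>w. (w - s) mod n" and j = "\<lambda>v. (v + s) mod n"])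
    fix v assume "v \<in> {0..<n}"
    then show "((v + s) mod n - s) mod n = v" and "(v + s) mod n \<in> {0..<n}"
      using True by (simp_all add: mod_diff_left_eq)
  next
    fix w assume "w \<in> {0..<n}"
    then show "((w - s) mod n + s) mod n = w" and "(w - s) mod n \<in> {0..<n}"
      using True by (simp_all add: mod_add_left_eq)
  qed simp
qed simp

definition circ_fourier :: "int \<Rightarrow> complex \<Rightarrow> (int \<Rightarrow> complex) \<Rightarrow> complex" where
  "circ_fourier n \<omega> f = (\<Sum>v\<in>{0..<n}. f v * \<omega> powi v)"

lemma circ_fourier_shift:
  assumes "\<omega> powi n = 1"
  shows "(\<Sum>v\<in>{0..<n}. f ((v + s) mod n) * \<omega> powi v) = \<omega> powi (- s) * circ_fourier n \<omega> f"
proof (cases "n = 0")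
  case False
  then have "\<omega> \<noteq> 0" using assms by (auto simp: power_int_0_left_if)
  have shift: "\<omega> powi v = \<omega> powi (- s) * \<omega> powi ((v + s) mod n)" for v
  proof -
    have "\<omega> powi ((v + s) mod n) = \<omega> powi v * \<omega> powi s"
      using \<open>\<omega> \<noteq> 0\<close> by (simp add: power_int_mod[OF assms] power_int_add)
    then show ?thesis
      using \<open>\<omega> \<noteq> 0\<close> by (simp add: power_int_minus field_simps)
  qed
  have "(\<Sum>v\<in>{0..<n}. f ((v + s) mod n) * \<omega> powi v) =
      (\<Sum>v\<in>{0..<n}. \<omega> powi (- s) * (f ((v + s) mod n) * \<omega> powi ((v + s) mod n)))"
    by (subst shift) (simp only: mult.left_commute)
  also have "\<dots> = \<omega> powi (- s) * (\<Sum>v\<in>{0..<n}. f ((v + s) mod n) * \<omega> powi ((v + s) mod n))"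
    by (rule sum_distrib_left[symmetric])
  also have "\<dots> = \<omega> powi (- s) * circ_fourier n \<omega> f"
    unfolding circ_fourier_def by (rule arg_cong[OF sum_circ_shift])
  finally show ?thesis .
qed (simp add: circ_fourier_def)

lemma circ_fourier_diff: "circ_fourier n \<omega> (f - g) = circ_fourier n \<omega> f - circ_fourier n \<omega> g"
  by (simp add: circ_fourier_def left_diff_distrib sum_subtractf)

lemma circ_fourier_delta:
  "y \<in> circ_vertices n \<Longrightarrow> circ_fourier n \<omega> (\<lambda>v. of_bool (v = y)) = \<omega> powi y"
  by (simp add: circ_fourier_def circ_vertices_def)

lemma cis_root_power_int_eq_1:
  assumes "0 < m"
  shows "cis (2 * pi / of_int m) powi k = 1 \<longleftrightarrow> m dvd k"
proof -
  have "cis (2 * pi / of_int m) powi k = 1 \<longleftrightarrow> (\<exists>j. of_int k * (2 * pi / of_int m) = of_int j * (2 * pi))"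
    by (simp add: cis_power_int cis_eq_1_iff)
  also have "\<dots> \<longleftrightarrow> (\<exists>j. k = j * m)"
  proof -
    have "of_int k * (2 * pi / of_int m) = of_int j * (2 * pi) \<longleftrightarrow> k = j * m" for j
      using assms pi_gt_zero by (simp add: field_simps flip: of_int_mult)
    then show ?thesis by simp
  qed
  finally show ?thesis by (auto simp: dvd_def mult.commute)
qed

lemma cis_root_power_int_eq_iff:
  assumes "0 < m"
  shows "cis (2 * pi / of_int m) powi p = cis (2 * pi / of_int m) powi q \<longleftrightarrow> m dvd p - q"
  by (simp add: power_int_diff cis_root_power_int_eq_1[OF assms, symmetric] divide_eq_1_iff
      flip: cis_root_power_int_eq_1[OF assms])

section \<open>Shift sums modulo 3\<close>

definition circ_sum3 :: "int \<Rightarrow> int \<Rightarrow> int \<Rightarrow> int \<Rightarrow> (int \<Rightarrow> int) \<Rightarrow> int \<Rightarrow> int" where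
  "circ_sum3 n r s t g u = g ((u + r) mod n) + g ((u + s) mod n) + g ((u + t) mod n)"

(* Frobenius: modulo 3 the cube of a sum of three commuting shifts is the sum of their cubes. *)
lemma circ_sum3_cube_cong:
  "[circ_sum3 n r s t (circ_sum3 n r s t (circ_sum3 n r s t g)) u = circ_sum3 n (3 * r) (3 * s) (3 * t) g u] (mod 3)"
proof -
  define h where "h z = g ((u + z) mod n)" for z
  have mod3: "(((u + p) mod n + q) mod n + q') mod n = (u + (p + q + q')) mod n" for p q q'
    by (simp add: mod_add_left_eq add.assoc)
  have "circ_sum3 n r s t (circ_sum3 n r s t (circ_sum3 n r s t g)) u - circ_sum3 n (3 * r) (3 * s) (3 * t) g u
    = 3 * (h (r + r + s) + h (r + r + t) + h (s + s + r) + h (s + s + t) + h (t + t + r) + h (t + t + s)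
        + 2 * h (r + s + t))"
    by (simp add: circ_sum3_def mod3 flip: h_def) (simp add: ac_simps)
  then show ?thesis by (simp add: cong_iff_dvd_diff)
qed

lemma circ_sum3_mult: "circ_sum3 n r s t (\<lambda>v. c * g v) u = c * circ_sum3 n r s t g u"
  by (simp add: circ_sum3_def algebra_simps)

lemma funpow_circ_sum3_zero: "(circ_sum3 n r s t ^^ m) (\<lambda>_. 0) = (\<lambda>_. 0)"
  by (induction m) (simp_all add: circ_sum3_def)

definition cong3_on :: "int \<Rightarrow> (int \<Rightarrow> int) \<Rightarrow> (int \<Rightarrow> int) \<Rightarrow> bool" where
  "cong3_on n g h \<longleftrightarrow> (\<forall>v\<in>{0..<n}. [g v = h v] (mod 3))"

lemma cong3_on_trans: "cong3_on n f g \<Longrightarrow> cong3_on n g h \<Longrightarrow> cong3_on n f h"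
  unfolding cong3_on_def by (blast intro: cong_trans)

lemma circ_sum3_cong:
  assumes "0 < n" and "cong3_on n g h"
  shows "[circ_sum3 n r s t g u = circ_sum3 n r s t h u] (mod 3)"
  using assms unfolding cong3_on_def circ_sum3_def by (simp add: cong_add)

lemma funpow_circ_sum3_cong3_on:
  assumes "0 < n" and "cong3_on n g h"
  shows "cong3_on n ((circ_sum3 n r s t ^^ m) g) ((circ_sum3 n r s t ^^ m) h)"
proof (induction m)
  case (Suc m)
  then show ?case using circ_sum3_cong[OF assms(1) Suc.IH] by (simp add: cong3_on_def)
qed (simp add: assms(2))

lemma circ_sum3_frobenius:
  assumes "0 < n"
  shows "cong3_on n ((circ_sum3 n r s t ^^ 3 ^ j) g) (circ_sum3 n (3 ^ j * r) (3 ^ j * s) (3 ^ j * t) g)"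
proof (induction j arbitrary: g)
  case 0
  show ?case by (simp add: cong3_on_def)
next
  case (Suc j)
  let ?A = "circ_sum3 n r s t ^^ 3 ^ j" and ?P = "circ_sum3 n (3 ^ j * r) (3 ^ j * s) (3 ^ j * t)"
  have P_cong: "cong3_on n (?P f) (?P f')" if "cong3_on n f f'" for f f'
    using circ_sum3_cong[OF assms that] by (simp add: cong3_on_def)
  have "(3::nat) ^ Suc j = 3 ^ j + (3 ^ j + 3 ^ j)" by simp
  then have "(circ_sum3 n r s t ^^ 3 ^ Suc j) g = ?A (?A (?A g))"
    by (simp only: funpow_add o_apply)
  moreover have "cong3_on n (?A (?A (?A g))) (?P (?P (?P g)))"
    using Suc.IH[of "?A (?A g)"] P_cong[OF Suc.IH[of "?A g"]] P_cong[OF P_cong[OF Suc.IH[of g]]]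
    by (blast intro: cong3_on_trans)
  moreover have "cong3_on n (?P (?P (?P g))) (circ_sum3 n (3 ^ Suc j * r) (3 ^ Suc j * s) (3 ^ Suc j * t) g)"
    using circ_sum3_cube_cong[of n "3 ^ j * r" "3 ^ j * s" "3 ^ j * t" g] by (simp add: cong3_on_def mult.assoc)
  ultimately show ?case by (auto intro: cong3_on_trans)
qed

lemma pow_cong_1_unbounded:
  fixes b n :: nat
  assumes "coprime b n" and "0 < n" and "1 < b"
  shows "\<exists>j. t \<le> b ^ j \<and> [b ^ j = 1] (mod n)"
proof -
  let ?j = "totient n * t"
  have "[b ^ ?j = 1] (mod n)"
    using cong_pow[OF euler_theorem[OF assms(1)], of t] by (simp add: power_mult)
  moreover have "t \<le> b ^ ?j"
  proof -
    have "t \<le> ?j" using assms(2) by (simp add: Suc_le_eq)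
    then show ?thesis using less_exp[of ?j] power_mono[of 2 b ?j] assms(3) by linarith
  qed
  ultimately show ?thesis by blast
qed

section \<open>Cubic circulant graphs\<close>

locale cubic_circulant =
  fixes l a :: int
  assumes l_pos: "0 < l"
    and regular: "regular_graph (circ_vertices (2 * l)) (circ_adj (2 * l) {a, - a, l}) 3"
begin

sublocale regular_sym_graph "circ_vertices (2 * l)" "circ_adj (2 * l) {a, - a, l}" 3
proof
  show "finite (circ_vertices (2 * l))" by (simp add: circ_vertices_def)
  have "(- l) mod (2 * l) = l mod (2 * l)"
    using mod_add_self2[of "- l" "2 * l"] by simp
  then have "\<forall>s\<in>{a, - a, l}. \<exists>s'\<in>{a, - a, l}. s' mod (2 * l) = (- s) mod (2 * l)"
    by auto
  then show "circ_adj (2 * l) {a, - a, l} v u" if "circ_adj (2 * l) {a, - a, l} u v" for u v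
    using circ_adj_sym that by blast
qed (fact regular)

lemma n_pos: "0 < 2 * l"
  using l_pos by simp

lemma nbrs_eq: "nbrs u = {(u + a) mod (2 * l), (u - a) mod (2 * l), (u + l) mod (2 * l)}"
  using circ_nbrs[OF n_pos] by (simp add: nbrs_def)

lemma nbrs_distinct:
  "(u + a) mod (2 * l) \<noteq> (u - a) mod (2 * l) \<and> (u + a) mod (2 * l) \<noteq> (u + l) mod (2 * l)
     \<and> (u - a) mod (2 * l) \<noteq> (u + l) mod (2 * l)"
proof -
  have "card (nbrs (u mod (2 * l))) = 3"
    using card_nbrs n_pos by simp
  then show ?thesis
    by (simp add: nbrs_eq mod_add_left_eq mod_diff_left_eq card_insert_if split: if_splits)
qed

lemma adj_sum_eq: "adj_sum f u = f ((u + a) mod (2 * l)) + f ((u - a) mod (2 * l)) + f ((u + l) mod (2 * l))"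
  using nbrs_distinct[of u] by (simp add: adj_sum_def nbrs_eq)

lemma walk_amp_Suc_Suc:
  "walk_amp x (Suc (Suc t)) u = 2 / 3 * (walk_amp x (Suc t) ((u + a) mod (2 * l))
     + walk_amp x (Suc t) ((u - a) mod (2 * l)) + walk_amp x (Suc t) ((u + l) mod (2 * l))) - walk_amp x t u"
  unfolding walk_amp_def by (simp add: adj_sum_eq)

lemma arc_to_shift:
  assumes "q \<in> circ_vertices (2 * l)" and "s \<in> {a, - a, l}"
  shows "((q + s) mod (2 * l), q) \<in> arcs (circ_vertices (2 * l)) (circ_adj (2 * l) {a, - a, l})"
proof -
  have "(q + s) mod (2 * l) \<in> nbrs q"
    using assms(2) by (auto simp: nbrs_eq)
  then show ?thesis
    using assms(1) arc_swap by (simp add: nbrs_def arcs_def)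
qed

lemma walk_amp_scaled_rec:
  "3 ^ Suc (Suc t) * walk_amp x (Suc (Suc (Suc t))) u =
     2 * (3 ^ Suc t * walk_amp x (Suc (Suc t)) ((u + a) mod (2 * l))
       + 3 ^ Suc t * walk_amp x (Suc (Suc t)) ((u - a) mod (2 * l))
       + 3 ^ Suc t * walk_amp x (Suc (Suc t)) ((u + l) mod (2 * l))) - 9 * (3 ^ t * walk_amp x (Suc t) u)"
  by (simp only: walk_amp_Suc_Suc[of x "Suc t"]) (simp add: algebra_simps)

abbreviation int_adj :: "(int \<Rightarrow> int) \<Rightarrow> int \<Rightarrow> int" where
  "int_adj \<equiv> circ_sum3 (2 * l) a (- a) l"

(* The recursion for 3^t F_{t+1} has integer coefficients 2 A and -9, so mod 3 only 2 A survives. *)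
lemma walk_amp_integral:
  "\<exists>K. (\<forall>u. 3 ^ t * walk_amp x (Suc t) u = of_int (K u))
     \<and> cong3_on (2 * l) K (\<lambda>u. 2 ^ t * (int_adj ^^ t) (\<lambda>v. of_bool (v = x)) u)"
proof -
  let ?N = "\<lambda>t u. 2 ^ t * (int_adj ^^ t) (\<lambda>v. of_bool (v = x)) u"
  have "\<exists>K1 K2. (\<forall>u. 3 ^ t * walk_amp x (Suc t) u = of_int (K1 u))
      \<and> (\<forall>u. 3 ^ Suc t * walk_amp x (Suc (Suc t)) u = of_int (K2 u))
      \<and> cong3_on (2 * l) K1 (?N t) \<and> cong3_on (2 * l) K2 (?N (Suc t))"
  proof (induction t)
    case 0
    have "3 * walk_amp x (Suc (Suc 0)) u = of_int (2 * int_adj (\<lambda>v. of_bool (v = x)) u)" for u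
      by (simp add: walk_amp_Suc_Suc circ_sum3_def)
    then show ?case
      by (intro exI[of _ "\<lambda>v. of_bool (v = x)"] exI[of _ "\<lambda>u. 2 * int_adj (\<lambda>v. of_bool (v = x)) u"])
        (simp add: cong3_on_def)
  next
    case (Suc t)
    then obtain K1 K2 where K1: "\<And>u. 3 ^ t * walk_amp x (Suc t) u = of_int (K1 u)"
      and K2: "\<And>u. 3 ^ Suc t * walk_amp x (Suc (Suc t)) u = of_int (K2 u)"
      and K2_cong: "cong3_on (2 * l) K2 (?N (Suc t))" by blast
    have step_int: "3 ^ Suc (Suc t) * walk_amp x (Suc (Suc (Suc t))) u = of_int (2 * int_adj K2 u - 9 * K1 u)" for u
      using walk_amp_scaled_rec[of t x u] by (simp only: K1 K2) (simp add: circ_sum3_def)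
    have step_cong: "cong3_on (2 * l) (\<lambda>u. 2 * int_adj K2 u - 9 * K1 u) (?N (Suc (Suc t)))"
    proof -
      have "[2 * int_adj K2 u - 9 * K1 u = 2 * int_adj (?N (Suc t)) u] (mod 3)" for u
        using circ_sum3_cong[OF n_pos K2_cong, of a "- a" l u]
        by (intro cong_diff[of _ _ 3 _ 0, simplified] cong_mult[OF cong_refl]) (simp_all add: cong_0_iff)
      moreover have "2 * int_adj (?N (Suc t)) u = ?N (Suc (Suc t)) u" for u
        by (simp only: circ_sum3_mult funpow.simps o_apply power_Suc mult.assoc)
      ultimately show ?thesis
        by (simp only: cong3_on_def) blast
    qed
    show ?case
      by (rule exI[of _ K2], rule exI[of _ "\<lambda>u. 2 * int_adj K2 u - 9 * K1 u"])
        (simp only: K2 step_int K2_cong step_cong simp_thms)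
  qed
  then show ?thesis by blast
qed

lemma state_transfer_int_adj_cong_0:
  assumes "state_transfer x y (Suc t) \<gamma>"
  shows "cong3_on (2 * l) ((int_adj ^^ t) (\<lambda>v. of_bool (v = x))) (\<lambda>_. 0)"
proof -
  obtain K where K: "\<And>u. 3 ^ t * walk_amp x (Suc t) u = of_int (K u)"
    and K_cong: "cong3_on (2 * l) K (\<lambda>u. 2 ^ t * (int_adj ^^ t) (\<lambda>v. of_bool (v = x)) u)"
    using walk_amp_integral by blast
  have "3 dvd K p" if "p \<in> {0..<2 * l}" for p
  proof -
    (* On an arc (p, q) with q \<noteq> y the transfer gives F_{t+1}(p) = F_t(q),
       and 3^t F_t is 3 times an integer. *)
    obtain q where "q \<in> nbrs p" and "q \<noteq> y"
      using nbrs_distinct[of p] by (auto simp: nbrs_eq)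
    moreover have "p \<in> circ_vertices (2 * l)" using that by (simp add: mem_circ_vertices)
    ultimately have "(p, q) \<in> arcs (circ_vertices (2 * l)) (circ_adj (2 * l) {a, - a, l})"
      by (simp add: nbrs_def arcs_def)
    then have "walk_amp x (Suc t) p = walk_amp x t q"
      using state_transfer_walk_amp[OF assms] \<open>q \<noteq> y\<close> by fastforce
    then have "of_int (K p) = 3 ^ t * walk_amp x t q" by (simp flip: K)
    then show ?thesis
    proof (cases t)
      case (Suc t')
      obtain K' where "\<And>u. 3 ^ t' * walk_amp x (Suc t') u = of_int (K' u)"
        using walk_amp_integral by blast
      then have "of_int (K p) = (of_int (3 * K' q) :: complex)"
        using \<open>of_int (K p) = 3 ^ t * walk_amp x t q\<close> Suc by simp
      then show ?thesis by (simp only: of_int_eq_iff) simp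
    qed simp
  qed
  moreover have "[K p = 2 ^ t * (int_adj ^^ t) (\<lambda>v. of_bool (v = x)) p] (mod 3)" if "p \<in> {0..<2 * l}" for p
    using K_cong that by (simp add: cong3_on_def)
  ultimately have "3 dvd 2 ^ t * (int_adj ^^ t) (\<lambda>v. of_bool (v = x)) p" if "p \<in> {0..<2 * l}" for p
    using that cong_dvd_iff by blast
  moreover have "prime (3 :: int)" by (simp add: prime_int_numeral_eq)
  moreover have "\<not> (3 :: int) dvd 2 ^ t"
    using prime_dvd_power[OF \<open>prime (3 :: int)\<close>, of 2 t] by auto
  ultimately show ?thesis
    by (simp add: cong3_on_def cong_0_iff prime_dvd_mult_iff)
qed

lemma int_adj_frobenius:
  fixes t :: nat
  assumes "\<not> 3 dvd l"
  obtains j where "t \<le> 3 ^ j" and "\<And>g. cong3_on (2 * l) ((int_adj ^^ 3 ^ j) g) (int_adj g)"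
proof -
  have "\<not> 3 dvd nat (2 * l)"
  proof
    assume "3 dvd nat (2 * l)"
    then have "int 3 dvd int (nat (2 * l))" by (simp only: int_dvd_int_iff)
    then show False using assms l_pos by simp presburger
  qed
  then have "coprime 3 (nat (2 * l))"
    by (intro prime_imp_coprime) simp_all
  then obtain j where "t \<le> 3 ^ j" and "[3 ^ j = 1] (mod nat (2 * l))"
    using pow_cong_1_unbounded[of 3 "nat (2 * l)" t] l_pos by auto
  then have "[3 ^ j = 1] (mod 2 * l)"
    using cong_int_iff[of "3 ^ j" 1 "nat (2 * l)"] l_pos by simp
  then have "(u + 3 ^ j * s) mod (2 * l) = (u + s) mod (2 * l)" for u s
    using cong_add[OF cong_refl[of u] cong_mult[OF _ cong_refl[of s]]] by (simp add: cong_def)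
  then have "circ_sum3 (2 * l) (3 ^ j * a) (3 ^ j * - a) (3 ^ j * l) = int_adj"
    by (intro ext) (simp only: circ_sum3_def)
  then have "cong3_on (2 * l) ((int_adj ^^ 3 ^ j) g) (int_adj g)" for g
    using circ_sum3_frobenius[OF n_pos, where r = a and s = "- a" and t = l and j = j and g = g]
    by (simp only:)
  with \<open>t \<le> 3 ^ j\<close> show ?thesis using that by blast
qed

lemma int_adj_power_delta_not_cong_0:
  assumes "\<not> 3 dvd l" and "x \<in> circ_vertices (2 * l)"
  shows "\<not> cong3_on (2 * l) ((int_adj ^^ t) (\<lambda>v. of_bool (v = x))) (\<lambda>_. 0)"
proof
  let ?\<delta> = "\<lambda>v. of_bool (v = x) :: int"
  assume zero: "cong3_on (2 * l) ((int_adj ^^ t) ?\<delta>) (\<lambda>_. 0)"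
  obtain j where "t \<le> 3 ^ j" and frobenius: "cong3_on (2 * l) ((int_adj ^^ 3 ^ j) ?\<delta>) (int_adj ?\<delta>)"
    using int_adj_frobenius[OF assms(1)] by metis
  have "(int_adj ^^ 3 ^ j) ?\<delta> = (int_adj ^^ (3 ^ j - t + t)) ?\<delta>"
    using \<open>t \<le> 3 ^ j\<close> by simp
  also have "\<dots> = (int_adj ^^ (3 ^ j - t)) ((int_adj ^^ t) ?\<delta>)"
    by (simp only: funpow_add o_apply)
  finally have "cong3_on (2 * l) ((int_adj ^^ 3 ^ j) ?\<delta>) (\<lambda>_. 0)"
    using funpow_circ_sum3_cong3_on[OF n_pos zero, where m = "3 ^ j - t"] by (simp add: funpow_circ_sum3_zero)
  moreover have "(x - a) mod (2 * l) \<in> {0..<2 * l}"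
    using n_pos by simp
  ultimately have "[int_adj ?\<delta> ((x - a) mod (2 * l)) = 0] (mod 3)"
    using frobenius unfolding cong3_on_def by (meson cong_sym cong_trans)
  moreover have "int_adj ?\<delta> ((x - a) mod (2 * l)) = 1"
  proof -
    have "((x - a) mod (2 * l) + a) mod (2 * l) = x"
      using assms(2) by (simp add: mod_add_left_eq mem_circ_vertices)
    then show ?thesis
      using nbrs_distinct[of "(x - a) mod (2 * l)"] by (auto simp: circ_sum3_def)
  qed
  ultimately show False by (simp add: cong_def)
qed

lemma no_state_transfer_if_not_3_dvd:
  assumes "\<not> 3 dvd l" and "x \<in> circ_vertices (2 * l)"
  shows "\<not> state_transfer x y (Suc t) \<gamma>"
  using int_adj_power_delta_not_cong_0[OF assms] state_transfer_int_adj_cong_0 by blast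

lemma fourier_walk_amp:
  assumes "\<omega> powi (2 * l) = 1" and "x \<in> circ_vertices (2 * l)"
  shows "circ_fourier (2 * l) \<omega> (walk_amp x t) =
    chebyshev_seq ((*) (2 / 3 * (\<omega> powi (- a) + \<omega> powi a + \<omega> powi (- l)))) 0 (\<omega> powi x) t"
proof -
  have fourier_adj: "circ_fourier (2 * l) \<omega> (\<lambda>u. 2 / of_nat 3 * adj_sum f u) =
      2 / 3 * (\<omega> powi (- a) + \<omega> powi a + \<omega> powi (- l)) * circ_fourier (2 * l) \<omega> f" for f
  proof -
    have "circ_fourier (2 * l) \<omega> (\<lambda>u. 2 / of_nat 3 * adj_sum f u) = 2 / 3 *
        ((\<Sum>v\<in>{0..<2 * l}. f ((v + a) mod (2 * l)) * \<omega> powi v)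
          + (\<Sum>v\<in>{0..<2 * l}. f ((v + - a) mod (2 * l)) * \<omega> powi v)
          + (\<Sum>v\<in>{0..<2 * l}. f ((v + l) mod (2 * l)) * \<omega> powi v))"
      by (simp add: circ_fourier_def adj_sum_eq sum_distrib_left distrib_right mult.assoc flip: sum.distrib)
    then show ?thesis
      by (simp only: circ_fourier_shift[OF assms(1)] minus_minus) (simp add: algebra_simps)
  qed
  have "circ_fourier (2 * l) \<omega> (walk_amp x t) =
      chebyshev_seq ((*) (2 / 3 * (\<omega> powi (- a) + \<omega> powi a + \<omega> powi (- l))))
        (circ_fourier (2 * l) \<omega> (\<lambda>_. 0)) (circ_fourier (2 * l) \<omega> (\<lambda>v. of_bool (v = x))) t"
    unfolding walk_amp_def
    by (rule chebyshev_seq_map[where h = "circ_fourier (2 * l) \<omega>" and L = "\<lambda>f u. 2 / of_nat 3 * adj_sum f u"])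
      (simp_all only: circ_fourier_diff fourier_adj)
  then show ?thesis
    using assms(2) by (simp add: circ_fourier_delta, simp add: circ_fourier_def)
qed

lemma state_transfer_fourier:
  assumes "state_transfer x y (Suc t) \<gamma>" and "y \<in> circ_vertices (2 * l)"
    and "\<omega> powi (2 * l) = 1" and "s \<in> {a, - a, l}"
  shows "\<omega> powi (- s) * circ_fourier (2 * l) \<omega> (walk_amp x (Suc t)) - circ_fourier (2 * l) \<omega> (walk_amp x t)
    = \<gamma> * \<omega> powi y"
proof -
  have amp: "walk_amp x (Suc t) ((q + s) mod (2 * l)) - walk_amp x t q = \<gamma> * of_bool (q = y)"
    if "q \<in> {0..<2 * l}" for q
    using state_transfer_walk_amp[OF assms(1) arc_to_shift[OF _ assms(4)]] that
    by (simp add: circ_vertices_def)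
  have "\<omega> powi (- s) * circ_fourier (2 * l) \<omega> (walk_amp x (Suc t)) - circ_fourier (2 * l) \<omega> (walk_amp x t)
      = (\<Sum>q\<in>{0..<2 * l}. (walk_amp x (Suc t) ((q + s) mod (2 * l)) - walk_amp x t q) * \<omega> powi q)"
    unfolding circ_fourier_shift[OF assms(3), symmetric]
    by (simp add: circ_fourier_def left_diff_distrib sum_subtractf)
  also have "\<dots> = \<gamma> * circ_fourier (2 * l) \<omega> (\<lambda>q. of_bool (q = y))"
    unfolding circ_fourier_def sum_distrib_left by (rule sum.cong[OF refl]) (simp add: amp)
  also have "\<dots> = \<gamma> * \<omega> powi y"
    using assms(2) by (simp add: circ_fourier_delta)
  finally show ?thesis .
qed

lemma state_transfer_fourier_vanishes:
  assumes "state_transfer x y (Suc t) \<gamma>" and "y \<in> circ_vertices (2 * l)" and "\<omega> powi (2 * l) = 1"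
    and "s \<in> {a, - a, l}" and "s' \<in> {a, - a, l}" and "\<omega> powi (- s) \<noteq> \<omega> powi (- s')"
  shows "circ_fourier (2 * l) \<omega> (walk_amp x (Suc t)) = 0"
proof -
  have "\<omega> powi (- s) * circ_fourier (2 * l) \<omega> (walk_amp x (Suc t))
      = \<omega> powi (- s') * circ_fourier (2 * l) \<omega> (walk_amp x (Suc t))"
    using state_transfer_fourier[OF assms(1-4)] state_transfer_fourier[OF assms(1-3,5)]
    by (simp add: diff_eq_eq)
  then show ?thesis using assms(6) by simp
qed

lemma state_transfer_phase:
  assumes "state_transfer x y (Suc t) \<gamma>" and "x \<in> circ_vertices (2 * l)" and "y \<in> circ_vertices (2 * l)"
  shows "\<gamma> = 1"
proof -
  have "circ_fourier (2 * l) 1 (walk_amp x t') = of_nat t'" for t'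
    using fourier_walk_amp[of 1 x t'] assms(2) chebyshev_seq_two[of 1 t'] by simp
  then show ?thesis
    using state_transfer_fourier[OF assms(1,3), of 1 l] by simp
qed

lemma no_state_transfer_if_parity_differs:
  assumes "even a \<noteq> even l" and "x \<in> circ_vertices (2 * l)" and "y \<in> circ_vertices (2 * l)"
  shows "\<not> state_transfer x y (Suc t) \<gamma>"
proof
  assume transfer: "state_transfer x y (Suc t) \<gamma>"
  have "(- 1 :: complex) powi (2 * l) = 1" by simp
  note fourier = fourier_walk_amp[OF this assms(2)]
  have "circ_fourier (2 * l) (- 1) (walk_amp x (Suc t)) = 0"
    using state_transfer_fourier_vanishes[OF transfer assms(3), of "- 1" a l] assms(1)
    by (auto simp: power_int_minus_left)
  moreover have "2 / 3 * ((- 1 :: complex) powi (- a) + (- 1) powi a + (- 1) powi (- l))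
      = of_int (if even a then 2 else - 2) / 3"
    using assms(1) by (auto simp: power_int_minus_left)
  ultimately show False
    using fourier chebyshev_seq_third_nonzero[of "if even a then 2 else - 2" "(- 1 :: complex) powi x" t]
    by (simp add: power_int_minus_left split: if_splits)
qed

lemma state_transfer_antipodal:
  assumes "state_transfer x y (Suc t) \<gamma>" and "x \<in> circ_vertices (2 * l)" and "y \<in> circ_vertices (2 * l)"
  shows "l dvd y - x"
proof -
  define \<omega> where "\<omega> = cis (2 * pi / of_int (2 * l))"
  have root: "\<omega> powi p = \<omega> powi q \<longleftrightarrow> 2 * l dvd p - q" for p q
    unfolding \<omega>_def using cis_root_power_int_eq_iff[OF n_pos] .
  have "\<omega> powi (2 * l) = 1"
    using root[of "2 * l" 0] by simp
  note fourier = fourier_walk_amp[OF this assms(2)] and transfer = state_transfer_fourier[OF assms(1,3) this]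
  have "a mod (2 * l) \<noteq> (- a) mod (2 * l)"
    using nbrs_distinct[of 0] by simp
  then have "\<omega> powi (- a) \<noteq> \<omega> powi (- (- a))"
    by (simp add: root mod_eq_dvd_iff dvd_diff_commute)
  then have vanish: "circ_fourier (2 * l) \<omega> (walk_amp x (Suc t)) = 0"
    using state_transfer_fourier_vanishes[OF assms(1,3) \<open>\<omega> powi (2 * l) = 1\<close>, of a "- a"] by simp
  then have "circ_fourier (2 * l) \<omega> (walk_amp x t) ^ 2 = (\<omega> powi x) ^ 2"
    using chebyshev_seq_invariant[of "2 / 3 * (\<omega> powi (- a) + \<omega> powi a + \<omega> powi (- l))" "\<omega> powi x" t]
    unfolding fourier by simp
  moreover have "circ_fourier (2 * l) \<omega> (walk_amp x t) = - (\<omega> powi y)"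
    using transfer[of l] vanish state_transfer_phase[OF assms] by (simp add: minus_equation_iff)
  ultimately have "\<omega> powi (y * 2) = \<omega> powi (x * 2)"
    by (simp add: power_int_mult)
  then have "2 * l dvd 2 * (y - x)"
    by (simp only: root right_diff_distrib mult.commute[of _ 2])
  then show ?thesis
    by (metis dvd_times_left_cancel_iff zero_neq_numeral)
qed

lemma state_transfer_time_even:
  assumes "state_transfer x y (Suc t) \<gamma>" and "x \<in> circ_vertices (2 * l)" and "y \<in> circ_vertices (2 * l)"
    and "3 dvd l" and "\<not> 3 dvd a"
  shows "even (Suc t)"
proof -
  define \<omega> where "\<omega> = cis (2 * pi / of_int 3)"
  have root: "\<omega> powi p = \<omega> powi q \<longleftrightarrow> 3 dvd p - q" for p q
    unfolding \<omega>_def using cis_root_power_int_eq_iff[of 3] by simp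
  have "\<omega> powi (2 * l) = 1" and "\<omega> powi (- l) = 1"
    using root[of _ 0] assms(4) by simp_all
  have "\<omega> \<noteq> 0" by (simp add: \<omega>_def)
  have "\<omega> powi (- a) \<noteq> \<omega> powi (- (- a))"
    using assms(5) by (simp add: root) presburger
  then have "circ_fourier (2 * l) \<omega> (walk_amp x (Suc t)) = 0"
    using state_transfer_fourier_vanishes[OF assms(1,3) \<open>\<omega> powi (2 * l) = 1\<close>, of a "- a"] by simp
  moreover have "\<omega> powi (- a) + \<omega> powi a + \<omega> powi (- l) = 0"
  proof -
    let ?z = "\<omega> powi a"
    have "?z ^ 3 = 1" and "?z \<noteq> 1"
      using root[of "a * 3" 0] root[of a 0] assms(5) by (simp_all add: power_int_mult)
    moreover have "(?z - 1) * (?z ^ 2 + ?z + 1) = ?z ^ 3 - 1"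
      by (simp add: algebra_simps power2_eq_square power3_eq_cube)
    ultimately have "?z ^ 2 + ?z + 1 = 0" by simp
    moreover have "\<omega> powi (- a) = ?z ^ 2"
      using \<open>?z ^ 3 = 1\<close> \<open>\<omega> \<noteq> 0\<close>
      by (simp add: power_int_minus field_simps power3_eq_cube power2_eq_square)
    ultimately show ?thesis
      using \<open>\<omega> powi (- l) = 1\<close> by (simp add: algebra_simps)
  qed
  ultimately have "chebyshev_seq ((*) 0) 0 (\<omega> powi x) (Suc t) = 0"
    using fourier_walk_amp[OF \<open>\<omega> powi (2 * l) = 1\<close> assms(2), of "Suc t"] by simp
  then show ?thesis
    by (rule chebyshev_seq_zero_eq_0_imp_even) (simp add: \<open>\<omega> \<noteq> 0\<close>)
qed

lemma state_transfer_parity: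
  assumes "state_transfer x y (Suc t) \<gamma>" and "x \<in> circ_vertices (2 * l)" and "y \<in> circ_vertices (2 * l)"
    and "odd a" and "odd l"
  shows "(- 1) ^ Suc t * (- 1) powi x = \<gamma> * (- 1 :: complex) powi y"
proof -
  have "(- 1 :: complex) powi (2 * l) = 1" by simp
  moreover have "2 / 3 * ((- 1 :: complex) powi (- a) + (- 1) powi a + (- 1) powi (- l)) = - 2"
    using assms(4,5) by (simp add: power_int_minus_left)
  ultimately have "circ_fourier (2 * l) (- 1) (walk_amp x t') = (- 1) ^ Suc t' * of_nat t' * (- 1) powi x" for t'
    using fourier_walk_amp[of "- 1" x t'] assms(2) chebyshev_seq_minus_two by simp
  then show ?thesis
    using state_transfer_fourier[OF assms(1,3), of "- 1" l] assms(5)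
    by (simp add: power_int_minus_left algebra_simps)
qed

lemma no_state_transfer_if_odd:
  assumes "3 dvd l" and "\<not> 3 dvd a" and "odd a" and "odd l"
    and "x \<in> circ_vertices (2 * l)" and "y \<in> circ_vertices (2 * l)" and "x \<noteq> y"
  shows "\<not> state_transfer x y (Suc t) \<gamma>"
proof
  assume transfer: "state_transfer x y (Suc t) \<gamma>"
  have "(- 1 :: complex) powi x = (- 1) powi y"
    using state_transfer_parity[OF transfer assms(5,6,3,4)] state_transfer_phase[OF transfer assms(5,6)]
      state_transfer_time_even[OF transfer assms(5,6,1,2)] by simp
  then have "even (y - x)"
    by (auto simp: power_int_minus_left split: if_splits)
  obtain k where k: "y - x = l * k"
    using state_transfer_antipodal[OF transfer assms(5,6)] by blast
  have "l * k < l * 2" and "l * (- 2) < l * k"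
    using k assms(5,6) unfolding mem_circ_vertices by linarith+
  then have "k < 2" and "- 2 < k"
    using l_pos mult_left_less_imp_less less_imp_le by blast+
  moreover have "k \<noteq> 0" using k assms(7) by auto
  ultimately have "k = 1 \<or> k = - 1" by linarith
  then show False
    using k \<open>even (y - x)\<close> assms(4) by auto
qed

end

theorem theorem1p2:
  fixes l a :: int
  assumes "l \<ge> 2" and "1 \<le> a" and "a \<le> l - 1"
    and "connected_graph (circ_vertices (2*l)) (circ_adj (2*l) {a, -a, l})"
    and "regular_graph (circ_vertices (2*l)) (circ_adj (2*l) {a, -a, l}) 3"
  shows "\<not> (\<exists>x y (\<tau>::nat) (\<gamma>::complex).
            x \<in> circ_vertices (2*l) \<and> y \<in> circ_vertices (2*l) \<and> x \<noteq> y \<and> \<tau> \<ge> 1 \<and> cmod \<gamma> = 1 \<and>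
            (\<forall>e \<in> arcs (circ_vertices (2*l)) (circ_adj (2*l) {a, -a, l}).
               (grover_apply (circ_vertices (2*l)) (circ_adj (2*l) {a, -a, l}) ^^ \<tau>)
                  (vertex_state (circ_vertices (2*l)) (circ_adj (2*l) {a, -a, l}) x) e
               = \<gamma> * vertex_state (circ_vertices (2*l)) (circ_adj (2*l) {a, -a, l}) y e))"
proof -
  interpret cubic_circulant l a
    using assms(1,5) by unfold_locales simp_all
  have "\<not> state_transfer x y \<tau> \<gamma>"
    if x: "x \<in> circ_vertices (2 * l)" and y: "y \<in> circ_vertices (2 * l)" and "x \<noteq> y" and "1 \<le> \<tau>"
    for x y \<tau> \<gamma>
  proof -
    obtain t where \<tau>: "\<tau> = Suc t" using \<open>1 \<le> \<tau>\<close> by (cases \<tau>) auto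
    have "2 \<le> 2 * l" using assms(1) by simp
    note disconnected = circ_not_connected[OF this _ _ _, of _ "{a, - a, l}"]
    show ?thesis
      unfolding \<tau>
    proof (cases "3 dvd l")
      case False
      then show "\<not> state_transfer x y (Suc t) \<gamma>" using no_state_transfer_if_not_3_dvd x by blast
    next
      case True
      show "\<not> state_transfer x y (Suc t) \<gamma>"
      proof (cases "even a = even l")
        case False
        then show ?thesis using no_state_transfer_if_parity_differs x y by blast
      next
        case True
        have "odd a" and "odd l" using disconnected[of 2] assms(4) True by auto
        moreover have "\<not> 3 dvd a" using disconnected[of 3] assms(4) \<open>3 dvd l\<close> by auto
        ultimately show ?thesis using no_state_transfer_if_odd \<open>3 dvd l\<close> x y \<open>x \<noteq> y\<close> by blast
      qed
    qed
  qed
  then show ?thesis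
    unfolding state_transfer_def[symmetric] by blast
qed

end
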